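(* Let $A$ be a real block tridiagonal matrix with square diagonal blocks $A_{11},\dots,A_{nn}$ ($n\ge2$), off-diagonal blocks $A_{i,i+1},A_{i+1,i}$ ($i=1,\dots,n-1$) and all other blocks zero. Suppose $A_{11}>0$, $A_{nn}>0$, and for every $i=1,\dots,n-1$ $$\begin{pmatrix}A_{ii}&2A_{i,i+1}\\2A_{i+1,i}&A_{i+1,i+1}\end{pmatrix}>0.$$ Then $A>0$.
   Context: For a real square (not necessarily symmetric) matrix $M$, $M>0$ means $\mathbf{y}^\top M\mathbf{y}>0$ for all nonzero real vectors $\mathbf{y}$. *)

theory Defs
  imports "Jordan_Normal_Form.Matrix"
begin

text \<open>Positive definiteness in the paper's sense (M need not be symmetric):
  M is square and y^T M y > 0 for every nonzero real vector y.\<close>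
definition pos_def :: "real mat \<Rightarrow> bool" where
  "pos_def M \<longleftrightarrow> dim_row M = dim_col M \<and>
     (\<forall>y \<in> carrier_vec (dim_row M). y \<noteq> 0\<^sub>v (dim_row M) \<longrightarrow> y \<bullet> (M *\<^sub>v y) > 0)"

text \<open>Block partition with block sizes d 1, ..., d n (blocks indexed from 1).
  blk_off d i is the index offset of block i; blk A d i j is the block A_ij.\<close>
definition blk_off :: "(nat \<Rightarrow> nat) \<Rightarrow> nat \<Rightarrow> nat" where
  "blk_off d i = (\<Sum>k\<in>{1..<i}. d k)"

definition blk :: "real mat \<Rightarrow> (nat \<Rightarrow> nat) \<Rightarrow> nat \<Rightarrow> nat \<Rightarrow> real mat" where
  "blk A d i j = mat (d i) (d j) (\<lambda>(r, c). A $$ (blk_off d i + r, blk_off d j + c))"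

end

theory Submission imports Defs begin

(* Cut y into blocks y_1, ..., y_n and write F_ij = y_i^T A_ij y_j, so that
   y^T A y = sum of all F_ij.  Block tridiagonality kills F_ij for |i - j| > 1, hence
     2 y^T A y = F_11 + F_nn + sum_{i<n} (F_ii + F_(i+1)(i+1) + 2 F_i(i+1) + 2 F_(i+1)i),
   because every diagonal term F_ii is counted twice on the right.  The summand for i is the
   quadratic form of the i-th 2x2 block matrix of the hypothesis at (y_i, y_(i+1)), so all
   terms are nonnegative.  If y is nonzero, some block y_k is nonzero: for k < n the k-th pair
   term is positive, for k = n the term F_nn is positive. *)

lemma quad_form_sum:
  assumes "M \<in> carrier_mat D D" "z \<in> carrier_vec D"
  shows "z \<bullet> (M *\<^sub>v z) = (\<Sum>r<D. \<Sum>c<D. z $ r * M $$ (r, c) * z $ c)"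
  using assms
  by (auto simp: scalar_prod_def row_def sum_distrib_left atLeast0LessThan
      mult.assoc mult.left_commute intro!: sum.cong)

lemma pos_def_vec_form:
  assumes pd: "pos_def M" and M: "M \<in> carrier_mat D D"
  shows "vec D w \<bullet> (M *\<^sub>v vec D w) \<ge> 0"
    and "\<exists>t<D. w t \<noteq> 0 \<Longrightarrow> vec D w \<bullet> (M *\<^sub>v vec D w) > 0"
proof -
  have pos: "vec D w \<noteq> 0\<^sub>v D \<Longrightarrow> vec D w \<bullet> (M *\<^sub>v vec D w) > 0"
    using pd M unfolding pos_def_def carrier_mat_def by auto
  have nonzero: "vec D w \<noteq> 0\<^sub>v D \<longleftrightarrow> (\<exists>t<D. w t \<noteq> 0)"
    by (auto simp: vec_eq_iff)
  show "\<exists>t<D. w t \<noteq> 0 \<Longrightarrow> vec D w \<bullet> (M *\<^sub>v vec D w) > 0"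
    using pos nonzero by blast
  show "vec D w \<bullet> (M *\<^sub>v vec D w) \<ge> 0"
  proof (cases "\<exists>t<D. w t \<noteq> 0")
    case True then show ?thesis using pos nonzero by fastforce
  next
    case False then show ?thesis by (simp add: quad_form_sum[OF M])
  qed
qed

lemma sum_lessThan_add: "(\<Sum>r<a + b. f r) = (\<Sum>r<a. f r) + (\<Sum>t<b. f (a + t :: nat) :: real)"
  by (induction b) auto

lemma blk_off_Suc: "m \<ge> 1 \<Longrightarrow> blk_off d (Suc m) = blk_off d m + d m"
  unfolding blk_off_def by (simp add: atLeastLessThanSuc add.commute)

lemma blk_off_total: "(\<Sum>k\<in>{1..n}. d k) = blk_off d (Suc n)"
  unfolding blk_off_def by (simp add: atLeastLessThanSuc_atLeastAtMost)

lemma sum_over_blocks: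
  "(\<Sum>r<blk_off d (Suc m). f r) = (\<Sum>k\<in>{1..m}. \<Sum>t<d k. f (blk_off d k + t) :: real)"
proof (induction m)
  case 0 then show ?case by (simp add: blk_off_def)
next
  case (Suc m)
  have "(\<Sum>r<blk_off d (Suc (Suc m)). f r)
      = (\<Sum>r<blk_off d (Suc m). f r) + (\<Sum>t<d (Suc m). f (blk_off d (Suc m) + t))"
    by (simp add: blk_off_Suc[of "Suc m"] sum_lessThan_add)
  then show ?case using Suc by (simp add: atLeastAtMostSuc_conv)
qed

lemma index_in_block:
  "r < blk_off d (Suc m) \<Longrightarrow> \<exists>k\<in>{1..m}. \<exists>t<d k. r = blk_off d k + t"
proof (induction m)
  case 0 then show ?case by (simp add: blk_off_def)
next
  case (Suc m)
  show ?case
  proof (cases "r < blk_off d (Suc m)")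
    case True then show ?thesis using Suc.IH by force
  next
    case False
    then have "r - blk_off d (Suc m) < d (Suc m)"
      using Suc.prems blk_off_Suc[of "Suc m" d] by simp
    moreover have "r = blk_off d (Suc m) + (r - blk_off d (Suc m))" using False by simp
    ultimately show ?thesis by force
  qed
qed

lemma blk_dims [simp]: "dim_row (blk A d i j) = d i" "dim_col (blk A d i j) = d j"
  unfolding blk_def by simp_all

lemma blk_carrier: "blk A d i j \<in> carrier_mat (d i) (d j)"
  unfolding carrier_mat_def by simp

lemma blk_index: "t < d i \<Longrightarrow> s < d j \<Longrightarrow> blk A d i j $$ (t, s) = A $$ (blk_off d i + t, blk_off d j + s)"
  unfolding blk_def by simp

lemma tridiagonal_double_sum:
  assumes zero: "\<And>i j. i \<in> {1..N} \<Longrightarrow> j \<in> {1..N} \<Longrightarrow> i + 1 < j \<or> j + 1 < i \<Longrightarrow> B i j = (0::real)"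
  shows "n \<le> N \<Longrightarrow> (\<Sum>i\<in>{1..n}. \<Sum>j\<in>{1..n}. B i j)
           = (\<Sum>i\<in>{1..n}. B i i) + (\<Sum>i\<in>{1..<n}. B i (Suc i) + B (Suc i) i)"
proof (induction n)
  case 0 then show ?case by simp
next
  case (Suc n)
  have far: "(\<Sum>j\<in>{1..<n}. B (Suc n) j) = 0" "(\<Sum>j\<in>{1..<n}. B j (Suc n)) = 0"
    using Suc.prems by (auto intro!: sum.neutral zero)
  have "(\<Sum>i\<in>{1..Suc n}. \<Sum>j\<in>{1..Suc n}. B i j) = (\<Sum>i\<in>{1..n}. \<Sum>j\<in>{1..n}. B i j)
     + (\<Sum>j\<in>{1..n}. B j (Suc n)) + (\<Sum>j\<in>{1..n}. B (Suc n) j) + B (Suc n) (Suc n)"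
    by (simp add: atLeastAtMostSuc_conv sum.distrib)
  moreover have "n \<ge> 1 \<Longrightarrow> {1..n} = insert n {1..<n}" by auto
  ultimately show ?case using Suc far
    by (cases "n \<ge> 1") (auto simp: atLeastAtMostSuc_conv atLeastLessThanSuc)
qed

text \<open>Each diagonal entry occurs in two consecutive pairs, except the first and the last.\<close>
lemma sum_consecutive_pairs:
  "n \<ge> 1 \<Longrightarrow> (\<Sum>i\<in>{1..<n}. f i + f (Suc i)) + f 1 + f n = 2 * (\<Sum>i\<in>{1..n}. f i :: real)"
proof (induction n rule: nat_induct_at_least)
  case base then show ?case by simp
next
  case (Suc n) then show ?case by (simp add: atLeastAtMostSuc_conv)
qed

lemma four_block_index:
  fixes X Y Z W :: "real mat"
  assumes "X \<in> carrier_mat a a" "Y \<in> carrier_mat a b" "Z \<in> carrier_mat b a" "W \<in> carrier_mat b b"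
  shows "t < a \<Longrightarrow> s < a \<Longrightarrow> four_block_mat X Y Z W $$ (t, s) = X $$ (t, s)"
    "t < a \<Longrightarrow> s < b \<Longrightarrow> four_block_mat X Y Z W $$ (t, a + s) = Y $$ (t, s)"
    "t < b \<Longrightarrow> s < a \<Longrightarrow> four_block_mat X Y Z W $$ (a + t, s) = Z $$ (t, s)"
    "t < b \<Longrightarrow> s < b \<Longrightarrow> four_block_mat X Y Z W $$ (a + t, a + s) = W $$ (t, s)"
  using assms by (subst index_mat_four_block; auto)+

definition block_form :: "real mat \<Rightarrow> (nat \<Rightarrow> nat) \<Rightarrow> (nat \<Rightarrow> nat \<Rightarrow> real) \<Rightarrow> nat \<Rightarrow> nat \<Rightarrow> real" where
  "block_form A d w i j = (\<Sum>t<d i. \<Sum>s<d j. w i t * A $$ (blk_off d i + t, blk_off d j + s) * w j s)"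

text \<open>The quadratic form of the i-th pair matrix of the hypothesis, evaluated at (w_i, w_j).\<close>
definition pair_form :: "real mat \<Rightarrow> (nat \<Rightarrow> nat) \<Rightarrow> (nat \<Rightarrow> nat \<Rightarrow> real) \<Rightarrow> nat \<Rightarrow> nat \<Rightarrow> real" where
  "pair_form A d w i j = block_form A d w i i + block_form A d w j j
                         + 2 * (block_form A d w i j + block_form A d w j i)"

lemma quad_form_blocks:
  assumes A: "A \<in> carrier_mat (blk_off d (Suc n)) (blk_off d (Suc n))"
    and y: "y \<in> carrier_vec (blk_off d (Suc n))"
  shows "y \<bullet> (A *\<^sub>v y) = (\<Sum>i\<in>{1..n}. \<Sum>j\<in>{1..n}. block_form A d (\<lambda>k t. y $ (blk_off d k + t)) i j)"
  unfolding quad_form_sum[OF A y] sum_over_blocks block_form_def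
  by (intro sum.cong refl sum.swap)

lemma diagonal_block_form:
  assumes "pos_def (blk A d k k)"
  shows "block_form A d w k k \<ge> 0"
    and "\<exists>t<d k. w k t \<noteq> 0 \<Longrightarrow> block_form A d w k k > 0"
proof -
  have "vec (d k) (w k) \<bullet> (blk A d k k *\<^sub>v vec (d k) (w k)) = block_form A d w k k"
    unfolding quad_form_sum[OF blk_carrier vec_carrier] block_form_def
    by (intro sum.cong refl) (simp add: blk_index)
  then show "block_form A d w k k \<ge> 0" "\<exists>t<d k. w k t \<noteq> 0 \<Longrightarrow> block_form A d w k k > 0"
    using pos_def_vec_form[OF assms blk_carrier, of "w k"] by simp_all
qed

lemma pair_block_form:
  assumes pd: "pos_def (four_block_mat (blk A d i i) (2 \<cdot>\<^sub>m blk A d i j) (2 \<cdot>\<^sub>m blk A d j i) (blk A d j j))"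
  shows "pair_form A d w i j \<ge> 0"
    and "\<exists>t<d i. w i t \<noteq> 0 \<Longrightarrow> pair_form A d w i j > 0"
proof -
  let ?M = "four_block_mat (blk A d i i) (2 \<cdot>\<^sub>m blk A d i j) (2 \<cdot>\<^sub>m blk A d j i) (blk A d j j)"
  define u where "u = (\<lambda>r. if r < d i then w i r else w j (r - d i))"
  define g where "g = (\<lambda>r c. u r * ?M $$ (r, c) * u c)"
  have M: "?M \<in> carrier_mat (d i + d j) (d i + d j)"
    by (intro four_block_carrier_mat blk_carrier)
  have "2 \<cdot>\<^sub>m blk A d i j \<in> carrier_mat (d i) (d j)" "2 \<cdot>\<^sub>m blk A d j i \<in> carrier_mat (d j) (d i)"
    by (simp_all add: blk_carrier)
  note entry = four_block_index[OF blk_carrier[of A d i i] this blk_carrier[of A d j j]]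
  have "vec (d i + d j) u \<bullet> (?M *\<^sub>v vec (d i + d j) u) = (\<Sum>r<d i + d j. \<Sum>c<d i + d j. g r c)"
    unfolding quad_form_sum[OF M vec_carrier] g_def by simp
  also have "\<dots> = (\<Sum>r<d i. \<Sum>c<d i. g r c) + (\<Sum>r<d i. \<Sum>c<d j. g r (d i + c))
     + ((\<Sum>r<d j. \<Sum>c<d i. g (d i + r) c) + (\<Sum>r<d j. \<Sum>c<d j. g (d i + r) (d i + c)))"
    by (simp only: sum_lessThan_add sum.distrib)
  also have "(\<Sum>r<d i. \<Sum>c<d i. g r c) = block_form A d w i i"
    unfolding block_form_def g_def u_def by (intro sum.cong refl) (simp add: entry blk_index)
  also have "(\<Sum>r<d i. \<Sum>c<d j. g r (d i + c)) = 2 * block_form A d w i j"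
    unfolding block_form_def g_def u_def sum_distrib_left
    by (intro sum.cong refl) (simp add: entry blk_index)
  also have "(\<Sum>r<d j. \<Sum>c<d i. g (d i + r) c) = 2 * block_form A d w j i"
    unfolding block_form_def g_def u_def sum_distrib_left
    by (intro sum.cong refl) (simp add: entry blk_index)
  also have "(\<Sum>r<d j. \<Sum>c<d j. g (d i + r) (d i + c)) = block_form A d w j j"
    unfolding block_form_def g_def u_def by (intro sum.cong refl) (simp add: entry blk_index)
  finally have form: "vec (d i + d j) u \<bullet> (?M *\<^sub>v vec (d i + d j) u) = pair_form A d w i j"
    unfolding pair_form_def by (simp add: algebra_simps)
  have "(\<exists>t<d i. w i t \<noteq> 0) \<Longrightarrow> (\<exists>t<d i + d j. u t \<noteq> 0)"
    unfolding u_def by (metis trans_less_add1)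
  then show "pair_form A d w i j \<ge> 0" "\<exists>t<d i. w i t \<noteq> 0 \<Longrightarrow> pair_form A d w i j > 0"
    using pos_def_vec_form[OF pd M, of u] form by simp_all
qed

lemma tridiagonal_form_identity:
  assumes n: "n \<ge> 1"
    and A: "A \<in> carrier_mat (blk_off d (Suc n)) (blk_off d (Suc n))"
    and y: "y \<in> carrier_vec (blk_off d (Suc n))"
    and tridiag: "\<And>i j. i \<in> {1..n} \<Longrightarrow> j \<in> {1..n} \<Longrightarrow> i + 1 < j \<or> j + 1 < i \<Longrightarrow>
                  blk A d i j = 0\<^sub>m (d i) (d j)"
  defines "w \<equiv> \<lambda>k t. y $ (blk_off d k + t)"
  shows "2 * (y \<bullet> (A *\<^sub>v y)) = block_form A d w 1 1 + block_form A d w n n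
                                + (\<Sum>i\<in>{1..<n}. pair_form A d w i (Suc i))"
proof -
  let ?F = "block_form A d w"
  have far_zero: "?F i j = 0" if "i \<in> {1..n}" "j \<in> {1..n}" "i + 1 < j \<or> j + 1 < i" for i j
  proof -
    have "A $$ (blk_off d i + t, blk_off d j + s) = 0" if "t < d i" "s < d j" for t s
      using tridiag[OF \<open>i \<in> _\<close> \<open>j \<in> _\<close> \<open>_ \<or> _\<close>] blk_index[where A = A and d = d and i = i and j = j] that by simp
    then show ?thesis unfolding block_form_def by simp
  qed
  have "y \<bullet> (A *\<^sub>v y) = (\<Sum>i\<in>{1..n}. ?F i i) + (\<Sum>i\<in>{1..<n}. ?F i (Suc i) + ?F (Suc i) i)"
    using quad_form_blocks[OF A y] tridiagonal_double_sum[of n, OF far_zero] unfolding w_def by simp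
  moreover have "(\<Sum>i\<in>{1..<n}. pair_form A d w i (Suc i))
      = (\<Sum>i\<in>{1..<n}. ?F i i + ?F (Suc i) (Suc i)) + 2 * (\<Sum>i\<in>{1..<n}. ?F i (Suc i) + ?F (Suc i) i)"
    unfolding pair_form_def by (simp add: sum.distrib sum_distrib_left)
  ultimately show ?thesis using sum_consecutive_pairs[OF n, of "\<lambda>i. ?F i i"] by simp
qed

theorem mainTheorem7:
  fixes A :: "real mat" and d :: "nat \<Rightarrow> nat" and n :: nat
  assumes n2: "n \<ge> 2"
    and dimA: "A \<in> carrier_mat (\<Sum>k\<in>{1..n}. d k) (\<Sum>k\<in>{1..n}. d k)"
    and tridiag: "\<And>i j. i \<in> {1..n} \<Longrightarrow> j \<in> {1..n} \<Longrightarrow> i + 1 < j \<or> j + 1 < i \<Longrightarrow>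
                  blk A d i j = 0\<^sub>m (d i) (d j)"
    and first: "pos_def (blk A d 1 1)"
    and last: "pos_def (blk A d n n)"
    and pairs: "\<And>i. i \<in> {1..n - 1} \<Longrightarrow>
       pos_def (four_block_mat (blk A d i i) (2 \<cdot>\<^sub>m blk A d i (i + 1))
                               (2 \<cdot>\<^sub>m blk A d (i + 1) i) (blk A d (i + 1) (i + 1)))"
  shows "pos_def A"
proof -
  let ?N = "blk_off d (Suc n)"
  have A: "A \<in> carrier_mat ?N ?N" using dimA by (simp only: blk_off_total)
  have "y \<bullet> (A *\<^sub>v y) > 0" if y: "y \<in> carrier_vec ?N" "y \<noteq> 0\<^sub>v ?N" for y
  proof -
    define w where "w = (\<lambda>k t. y $ (blk_off d k + t))"
    have pair_pd: "i \<in> {1..<n} \<Longrightarrow> pos_def (four_block_mat (blk A d i i) (2 \<cdot>\<^sub>m blk A d i (Suc i))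
        (2 \<cdot>\<^sub>m blk A d (Suc i) i) (blk A d (Suc i) (Suc i)))" for i
      using pairs[of i] by auto
    have pairs_nonneg: "(\<Sum>i\<in>{1..<n}. pair_form A d w i (Suc i)) \<ge> 0"
      by (intro sum_nonneg pair_block_form(1) pair_pd)
    have identity: "2 * (y \<bullet> (A *\<^sub>v y)) = block_form A d w 1 1 + block_form A d w n n
                      + (\<Sum>i\<in>{1..<n}. pair_form A d w i (Suc i))"
      using tridiagonal_form_identity[OF _ A y(1) tridiag] n2 unfolding w_def by simp
    obtain r where "r < ?N" "y $ r \<noteq> 0" using y by (auto simp: vec_eq_iff)
    then obtain k t where k: "k \<in> {1..n}" "t < d k" "w k t \<noteq> 0"
      using index_in_block[of r d n] unfolding w_def by auto
    have "2 * (y \<bullet> (A *\<^sub>v y)) > 0"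
    proof (cases "k = n")
      case True
      then show ?thesis using identity diagonal_block_form(1)[OF first, of w]
        diagonal_block_form(2)[OF last, of w] k pairs_nonneg by fastforce
    next
      case False
      then have "k \<in> {1..<n}" using k by auto
      then have "pair_form A d w k (Suc k) > 0"
        and "pair_form A d w k (Suc k) \<le> (\<Sum>i\<in>{1..<n}. pair_form A d w i (Suc i))"
        using pair_block_form(2)[OF pair_pd, of k w] k pair_block_form(1)[OF pair_pd]
        by (auto intro: member_le_sum)
      then show ?thesis using identity diagonal_block_form(1)[OF first, of w]
        diagonal_block_form(1)[OF last, of w] by linarith
    qed
    then show ?thesis by simp
  qed
  then show ?thesis unfolding pos_def_def using A by auto
qed

end
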